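(* Let $L$ be a shift having left special factors of arbitrarily large length, and let $\mu$ be a $\sigma$-invariant, nonatomic, regular Borel probability measure on $L$, positive on nonempty cylinders, with $\mu(SP_L)=0$. For each $k>0$ let $I^{(k)}_L=\{x\in I:\phi^{-1}(\iota(x))\in Cyl_L(v^{(k)})\}$, where $I=[0,1)$. Then each $I^{(k)}_L$ is a right-open interval, and $T_L$ is a translation on it: there is a constant $c_k$ with $T_L(x)=x+c_k$ for all $x\in I^{(k)}_L$.
   Context: $A$ is a finite totally ordered alphabet. $A^{\mathbb N}$ has the lexicographic order and the Cantor topology, and $\sigma$ deletes the first letter. A shift is a closed $L\subseteq A^{\mathbb N}$ with $\sigma(L)\subseteq L$. $Fact_L$ is the set of finite factors, and $Cyl_L(v)=\{w\in L:v\text{ prefix of }w\}$. For $w\le w'$ in $L$, $[w,w']=\{w''\in L:w\le w''\le w'\}$, and $w_{L,min}=\min L$. A factor $u$ is left special if $bu\in Fact_L$ for at least two letters $b$. $SP_L$ is the set of infinite words all of whose prefixes are left special. $\{v^{(k)}\}_{k>0}$ enumerates the words $au\in Fact_L$ ($a\in A$, $u$ nonempty) with $u$ not left special and every nonempty proper prefix of $u$ left special. Construction. Put $\phi_\mu(w)=\mu([w_{L,min},w])$. Let $Z_0$ be the set of $x\in[0,1]$ with $|\phi_\mu^{-1}(x)|\ge 2$; each such preimage consists of exactly two consecutive words. Let $\hat I=[0,1]\sqcup Z_0^-$, where $Z_0^-=\{z^-:z\in Z_0\}$ is a disjoint copy of $Z_0$. Order $\hat I$ so that $z^-<z$ with nothing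 in between, extending the order of $[0,1]$, and give it the order topology. Let $\iota$ be the inclusion $[0,1]\to\hat I$, and let $\kappa:\hat I\to[0,1]$ be the identity on $[0,1]$ with $z^-\mapsto z$. Define $\phi(w)=(\phi_\mu(w))^-$ if $\phi_\mu^{-1}(\phi_\mu(w))=\{w,w'\}$ with $w<w'$, and $\phi(w)=\phi_\mu(w)$ otherwise. Set $\hat T=\phi\circ\sigma\circ\phi^{-1}$ and $T_L=\kappa\circ\hat T\circ\iota:[0,1]\to[0,1]$. *)

theory Defs
  imports "HOL-Probability.Probability"
begin

definition shiftmap :: "(nat \<Rightarrow> 'a) \<Rightarrow> (nat \<Rightarrow> 'a)" where
  "shiftmap w = (\<lambda>n. w (Suc n))"

definition lex_less :: "(nat \<Rightarrow> 'a::linorder) \<Rightarrow> (nat \<Rightarrow> 'a) \<Rightarrow> bool" where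
  "lex_less w w' \<longleftrightarrow> (\<exists>n. (\<forall>i<n. w i = w' i) \<and> w n < w' n)"

definition lex_le :: "(nat \<Rightarrow> 'a::linorder) \<Rightarrow> (nat \<Rightarrow> 'a) \<Rightarrow> bool" where
  "lex_le w w' \<longleftrightarrow> lex_less w w' \<or> w = w'"

definition cantor_closed :: "(nat \<Rightarrow> 'a) set \<Rightarrow> bool" where
  "cantor_closed L \<longleftrightarrow> (\<forall>w. (\<forall>n. \<exists>w'\<in>L. \<forall>i<n. w' i = w i) \<longrightarrow> w \<in> L)"

definition is_shift :: "(nat \<Rightarrow> 'a) set \<Rightarrow> bool" where
  "is_shift L \<longleftrightarrow> cantor_closed L \<and> shiftmap ` L \<subseteq> L"

definition Fact :: "(nat \<Rightarrow> 'a) set \<Rightarrow> 'a list set" where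
  "Fact L = {u. \<exists>w\<in>L. \<exists>n. u = map w [n..<n + length u]}"

definition Cyl :: "(nat \<Rightarrow> 'a) set \<Rightarrow> 'a list \<Rightarrow> (nat \<Rightarrow> 'a) set" where
  "Cyl L v = {w\<in>L. \<forall>i<length v. w i = v ! i}"

definition left_special :: "(nat \<Rightarrow> 'a) set \<Rightarrow> 'a list \<Rightarrow> bool" where
  "left_special L u \<longleftrightarrow> (\<exists>b c. b \<noteq> c \<and> b # u \<in> Fact L \<and> c # u \<in> Fact L)"

definition SP :: "(nat \<Rightarrow> 'a) set \<Rightarrow> (nat \<Rightarrow> 'a) set" where
  "SP L = {w. \<forall>n. left_special L (map w [0..<n])}"

text \<open>The set of the words v^(k): au in Fact_L, u nonempty, u not left special, every
  nonempty proper prefix of u left special.\<close>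
definition Vwords :: "(nat \<Rightarrow> 'a) set \<Rightarrow> 'a list set" where
  "Vwords L = {a # u | a u. a # u \<in> Fact L \<and> u \<noteq> [] \<and> \<not> left_special L u \<and>
      (\<forall>m. 0 < m \<and> m < length u \<longrightarrow> left_special L (take m u))}"

definition lexmin :: "(nat \<Rightarrow> 'a::linorder) set \<Rightarrow> (nat \<Rightarrow> 'a)" where
  "lexmin L = (THE w. w \<in> L \<and> (\<forall>w'\<in>L. lex_le w w'))"

text \<open>Borel measures on L: the Borel sigma-algebra of L (Cantor topology) is generated by
  the cylinders Cyl_L(v).\<close>
definition borel_on :: "(nat \<Rightarrow> 'a) set \<Rightarrow> (nat \<Rightarrow> 'a) measure \<Rightarrow> bool" where
  "borel_on L \<mu> \<longleftrightarrow> space \<mu> = L \<and> sets \<mu> = sigma_sets L (range (Cyl L))"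

definition phi_mu :: "(nat \<Rightarrow> 'a) measure \<Rightarrow> (nat \<Rightarrow> 'a::linorder) set \<Rightarrow> (nat \<Rightarrow> 'a) \<Rightarrow> real" where
  "phi_mu \<mu> L w = measure \<mu> {w''\<in>L. lex_le (lexmin L) w'' \<and> lex_le w'' w}"

text \<open>The extended interval I-hat = [0,1] disjoint-union Z_0^- is encoded as real * bool:
  (x, False) is the point x of [0,1] (so iota x = (x, False)), and (z, True) is z^-.
  kappa is fst.\<close>
definition phi_hat :: "(nat \<Rightarrow> 'a) measure \<Rightarrow> (nat \<Rightarrow> 'a::linorder) set \<Rightarrow> (nat \<Rightarrow> 'a) \<Rightarrow> real \<times> bool" where
  "phi_hat \<mu> L w = (phi_mu \<mu> L w,
      (\<exists>w'\<in>L. lex_less w w' \<and> phi_mu \<mu> L w' = phi_mu \<mu> L w))"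

definition phi_inv :: "(nat \<Rightarrow> 'a) measure \<Rightarrow> (nat \<Rightarrow> 'a::linorder) set \<Rightarrow> real \<times> bool \<Rightarrow> (nat \<Rightarrow> 'a)" where
  "phi_inv \<mu> L p = (THE w. w \<in> L \<and> phi_hat \<mu> L w = p)"

definition T_L :: "(nat \<Rightarrow> 'a) measure \<Rightarrow> (nat \<Rightarrow> 'a::linorder) set \<Rightarrow> real \<Rightarrow> real" where
  "T_L \<mu> L x = fst (phi_hat \<mu> L (shiftmap (phi_inv \<mu> L (x, False))))"

definition I_k :: "(nat \<Rightarrow> 'a) measure \<Rightarrow> (nat \<Rightarrow> 'a::linorder) set \<Rightarrow> 'a list \<Rightarrow> real set" where
  "I_k \<mu> L v = {x \<in> {0..<1}. phi_inv \<mu> L (x, False) \<in> Cyl L v}"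

end

theory Submission
  imports Defs
begin

text \<open>For \<open>x \<in> [0,1)\<close>, the word \<open>\<phi>\<^sup>-\<^sup>1(\<iota> x)\<close> is the lexicographically largest \<open>w\<close> with
  \<open>\<mu>[w\<^sub>L\<^sub>,\<^sub>m\<^sub>i\<^sub>n, w] = x\<close>; it exists because \<open>\<mu>\<close> has no atoms and can be built letter by letter.
  Such a word starts with \<open>v\<close> exactly when \<open>\<mu>\<close>(words below the cylinder of \<open>v\<close>) \<open>\<le> x <\<close>
  \<open>\<mu>\<close>(words not above it), so \<open>I\<^sup>(\<^sup>k\<^sup>)\<close> is a right-open interval, nonempty since cylinders have
  positive measure. For \<open>v = au\<close> with \<open>u\<close> not left special, \<open>a\<close> is the only letter preceding \<open>u\<close>,
  so \<open>\<sigma>\<close> maps \<open>Cyl(au) \<inter> [w\<^sub>L\<^sub>,\<^sub>m\<^sub>i\<^sub>n, w]\<close> onto \<open>Cyl(u) \<inter> [w\<^sub>L\<^sub>,\<^sub>m\<^sub>i\<^sub>n, \<sigma> w]\<close>, preserving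
  measure; hence \<open>T\<^sub>L x - x\<close> depends only on \<open>v\<close>.\<close>

section \<open>The lexicographic order on infinite words\<close>

lemma lex_less_irrefl: "\<not> lex_less w w"
  by (auto simp: lex_less_def)

lemma lex_less_trans:
  assumes "lex_less (u::nat\<Rightarrow>'a::linorder) v" "lex_less v w" shows "lex_less u w"
proof -
  obtain n where n: "\<forall>i<n. u i = v i" "u n < v n" using assms(1) by (auto simp: lex_less_def)
  obtain m where m: "\<forall>i<m. v i = w i" "v m < w m" using assms(2) by (auto simp: lex_less_def)
  show ?thesis
    unfolding lex_less_def using n m
    by (intro exI[of _ "min n m"]) (cases n m rule: linorder_cases; auto)
qed

lemma lex_less_asym: "lex_less w w' \<Longrightarrow> \<not> lex_less w' w"
  using lex_less_trans lex_less_irrefl by blast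

lemma lex_less_total:
  assumes "(w::nat\<Rightarrow>'a::linorder) \<noteq> w'" shows "lex_less w w' \<or> lex_less w' w"
proof -
  define n where "n = (LEAST i. w i \<noteq> w' i)"
  have "w n \<noteq> w' n" unfolding n_def by (rule LeastI_ex) (use assms in auto)
  moreover have "\<forall>i<n. w i = w' i" unfolding n_def using not_less_Least by blast
  ultimately show ?thesis unfolding lex_less_def by (metis linorder_neqE)
qed

lemma lex_le_antisym: "lex_le u v \<Longrightarrow> lex_le v u \<Longrightarrow> u = v"
  unfolding lex_le_def using lex_less_asym by blast

lemma not_lex_le: "\<not> lex_le u v \<longleftrightarrow> lex_less v u"
  unfolding lex_le_def using lex_less_total lex_less_asym lex_less_irrefl by blast

lemma shift_lex_less_iff:
  assumes "y 0 = w 0"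
  shows "lex_less (shiftmap y) (shiftmap w) \<longleftrightarrow> lex_less y w"
proof
  assume "lex_less (shiftmap y) (shiftmap w)"
  then obtain n where n: "\<forall>i<n. y (Suc i) = w (Suc i)" "y (Suc n) < w (Suc n)"
    by (auto simp: lex_less_def shiftmap_def)
  with assms have "\<forall>i<Suc n. y i = w i" by (auto simp: less_Suc_eq_0_disj)
  with n show "lex_less y w" unfolding lex_less_def by blast
next
  assume "lex_less y w"
  then obtain n where n: "\<forall>i<n. y i = w i" "y n < w n" by (auto simp: lex_less_def)
  with assms obtain m where "n = Suc m" by (cases n) auto
  with n show "lex_less (shiftmap y) (shiftmap w)" unfolding lex_less_def shiftmap_def by auto
qed

lemma shift_lex_le_iff: "y 0 = w 0 \<Longrightarrow> lex_le (shiftmap y) (shiftmap w) \<longleftrightarrow> lex_le y w"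
  unfolding lex_le_def by (metis lex_less_total shift_lex_less_iff)

definition starts_with :: "(nat \<Rightarrow> 'a) \<Rightarrow> 'a list \<Rightarrow> bool" where
  "starts_with w p \<longleftrightarrow> (\<forall>i<length p. w i = p ! i)"

definition below_prefix :: "(nat \<Rightarrow> 'a::linorder) \<Rightarrow> 'a list \<Rightarrow> bool" where
  "below_prefix w p \<longleftrightarrow> (\<exists>i<length p. (\<forall>j<i. w j = p ! j) \<and> w i < p ! i)"

definition above_prefix :: "(nat \<Rightarrow> 'a::linorder) \<Rightarrow> 'a list \<Rightarrow> bool" where
  "above_prefix w p \<longleftrightarrow> (\<exists>i<length p. (\<forall>j<i. w j = p ! j) \<and> p ! i < w i)"

lemma starts_with_Nil [simp]: "starts_with w []"
  by (simp add: starts_with_def)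

lemma below_prefix_Nil [simp]: "\<not> below_prefix w []"
  by (simp add: below_prefix_def)

lemma above_prefix_Nil [simp]: "\<not> above_prefix w []"
  by (simp add: above_prefix_def)

lemma starts_with_snoc: "starts_with w (p @ [c]) \<longleftrightarrow> starts_with w p \<and> w (length p) = c"
  unfolding starts_with_def by (auto simp: nth_append less_Suc_eq)

lemma below_prefix_snoc:
  "below_prefix w (p @ [c]) \<longleftrightarrow> below_prefix w p \<or> (starts_with w p \<and> w (length p) < c)"
  unfolding below_prefix_def starts_with_def
  by (auto simp: nth_append less_Suc_eq)

lemma above_prefix_snoc:
  "above_prefix w (p @ [c]) \<longleftrightarrow> above_prefix w p \<or> (starts_with w p \<and> c < w (length p))"
  unfolding above_prefix_def starts_with_def
  by (auto simp: nth_append less_Suc_eq)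

lemma prefix_trichotomy:
  "(below_prefix w p \<or> starts_with w p \<or> above_prefix w p) \<and>
   \<not> (below_prefix w p \<and> starts_with w p) \<and> \<not> (below_prefix w p \<and> above_prefix w p) \<and>
   \<not> (starts_with w p \<and> above_prefix w p)"
  by (induction p rule: rev_induct) (auto simp: below_prefix_snoc starts_with_snoc above_prefix_snoc)

lemma below_prefix_lex_less: "below_prefix y p \<Longrightarrow> starts_with z p \<Longrightarrow> lex_less y z"
  proof -
  assume "below_prefix y p" "starts_with z p"
  then obtain i where "i < length p" "\<forall>j<i. y j = p ! j" "y i < p ! i"
    by (auto simp: below_prefix_def)
  with \<open>starts_with z p\<close> show ?thesis
    unfolding lex_less_def starts_with_def by (intro exI[of _ i]) auto
qed

lemma above_prefix_lex_less: "starts_with y p \<Longrightarrow> above_prefix z p \<Longrightarrow> lex_less y z"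
proof -
  assume "starts_with y p" "above_prefix z p"
  then obtain i where "i < length p" "\<forall>j<i. z j = p ! j" "p ! i < z i"
    by (auto simp: above_prefix_def)
  with \<open>starts_with y p\<close> show ?thesis
    unfolding lex_less_def starts_with_def by (intro exI[of _ i]) auto
qed

lemma below_above_prefix_lex_less: "below_prefix y p \<Longrightarrow> above_prefix z p \<Longrightarrow> lex_less y z"
proof -
  assume "below_prefix y p" "above_prefix z p"
  then obtain i k where i: "i < length p" "\<forall>j<i. y j = p ! j" "y i < p ! i"
    and k: "k < length p" "\<forall>j<k. z j = p ! j" "p ! k < z k"
    by (auto simp: below_prefix_def above_prefix_def)
  then show ?thesis
    unfolding lex_less_def by (intro exI[of _ "min i k"]) (cases i k rule: linorder_cases; auto)
qed

lemma lex_less_iff_below_some_prefix: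
  assumes P: "\<And>n. starts_with w (P n) \<and> length (P n) = n"
  shows "lex_less y w \<longleftrightarrow> (\<exists>n. below_prefix y (P n))"
proof
  assume "lex_less y w"
  then obtain k where "\<forall>i<k. y i = w i" "y k < w k" by (auto simp: lex_less_def)
  with P[of "Suc k"] have "below_prefix y (P (Suc k))"
    unfolding below_prefix_def starts_with_def by (intro exI[of _ k]) auto
  then show "\<exists>n. below_prefix y (P n)" ..
qed (use below_prefix_lex_less P in blast)

lemma lex_le_iff_not_above_any_prefix:
  assumes P: "\<And>n. starts_with w (P n) \<and> length (P n) = n"
  shows "lex_le y w \<longleftrightarrow> (\<forall>n. below_prefix y (P n) \<or> starts_with y (P n))"
proof
  assume "lex_le y w"
  then show "\<forall>n. below_prefix y (P n) \<or> starts_with y (P n)"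
    using P above_prefix_lex_less not_lex_le prefix_trichotomy by blast
next
  assume H: "\<forall>n. below_prefix y (P n) \<or> starts_with y (P n)"
  show "lex_le y w"
  proof (rule ccontr)
    assume "\<not> lex_le y w"
    then obtain k where "\<forall>i<k. w i = y i" "w k < y k" by (auto simp: not_lex_le lex_less_def)
    with P[of "Suc k"] have "above_prefix y (P (Suc k))"
      unfolding above_prefix_def starts_with_def by (intro exI[of _ k]) auto
    then show False using H prefix_trichotomy by blast
  qed
qed

lemma starts_with_initial_segment: "starts_with w (map w [0..<n]) \<and> length (map w [0..<n]) = n"
  by (simp add: starts_with_def)

section \<open>Lexicographic minima of closed sets\<close>

primrec min_prefix :: "(nat \<Rightarrow> 'a::{linorder,finite}) set \<Rightarrow> nat \<Rightarrow> 'a list" where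
  "min_prefix S 0 = []"
| "min_prefix S (Suc n) = min_prefix S n @ [Min {c. \<exists>w\<in>S. starts_with w (min_prefix S n @ [c])}]"

lemma length_min_prefix [simp]: "length (min_prefix S n) = n"
  by (induction n) auto

lemma min_prefix_extendable: "S \<noteq> {} \<Longrightarrow> \<exists>w\<in>S. starts_with w (min_prefix S n)"
proof (induction n)
  case (Suc n)
  then obtain w where w: "w \<in> S" "starts_with w (min_prefix S n)" by auto
  let ?C = "{c. \<exists>w\<in>S. starts_with w (min_prefix S n @ [c])}"
  have "w n \<in> ?C" using w by (auto simp: starts_with_snoc)
  then have "Min ?C \<in> ?C" by (intro Min_in) auto
  then show ?case by simp
qed auto

lemma nth_min_prefix: "i < n \<Longrightarrow> min_prefix S n ! i = min_prefix S (Suc i) ! i"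
  by (induction n) (auto simp: nth_append less_Suc_eq)

lemma cantor_closed_lex_min:
  fixes S :: "(nat \<Rightarrow> 'a::{linorder,finite}) set"
  assumes "cantor_closed S" "S \<noteq> {}" shows "\<exists>m\<in>S. \<forall>w\<in>S. lex_le m w"
proof -
  define m where "m = (\<lambda>i. min_prefix S (Suc i) ! i)"
  have m_starts: "starts_with m (min_prefix S n)" for n
    unfolding starts_with_def m_def length_min_prefix by (metis nth_min_prefix)
  have "\<exists>w'\<in>S. \<forall>i<n. w' i = m i" for n
    using min_prefix_extendable[OF assms(2), of n] m_starts[of n] by (auto simp: starts_with_def)
  then have "m \<in> S" using assms(1) unfolding cantor_closed_def by blast
  moreover have "lex_le m w" if "w \<in> S" for w
  proof (rule ccontr)
    assume "\<not> lex_le m w"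
    then obtain k where k: "\<forall>i<k. w i = m i" "w k < m k" by (auto simp: not_lex_le lex_less_def)
    then have "starts_with w (min_prefix S k)" using m_starts[of k] by (simp add: starts_with_def)
    with \<open>w \<in> S\<close> have "w k \<in> {c. \<exists>w\<in>S. starts_with w (min_prefix S k @ [c])}"
      by (auto simp: starts_with_snoc)
    then have "Min {c. \<exists>w\<in>S. starts_with w (min_prefix S k @ [c])} \<le> w k"
      by (intro Min_le) auto
    then have "m k \<le> w k" unfolding m_def by (simp add: nth_append)
    then show False using k(2) by simp
  qed
  ultimately show ?thesis by blast
qed

lemma cantor_closed_prefix_determined:
  assumes "cantor_closed L" "S \<subseteq> L"
    and "\<And>w w'. w \<in> S \<Longrightarrow> w' \<in> L \<Longrightarrow> \<forall>i<N. w i = w' i \<Longrightarrow> w' \<in> S"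
  shows "cantor_closed S"
  unfolding cantor_closed_def
proof (intro allI impI)
  fix w assume H: "\<forall>n. \<exists>w'\<in>S. \<forall>i<n. w' i = w i"
  then have "\<forall>n. \<exists>w'\<in>L. \<forall>i<n. w' i = w i" using assms(2) by (meson subsetD)
  then have "w \<in> L" using assms(1) unfolding cantor_closed_def by blast
  moreover obtain w' where "w' \<in> S" "\<forall>i<N. w' i = w i" using H by blast
  ultimately show "w \<in> S" using assms(3) by blast
qed

lemma funpow_shiftmap: "(shiftmap ^^ n) w i = w (n + i)"
  by (induction n arbitrary: i) (auto simp: shiftmap_def)

locale shift_measure =
  fixes L :: "(nat \<Rightarrow> 'a::{linorder,finite}) set" and \<mu> :: "(nat \<Rightarrow> 'a) measure"
  assumes shift: "is_shift L" and borel: "borel_on L \<mu>" and prob: "prob_space \<mu>"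
    and nonatomic: "\<forall>w\<in>L. emeasure \<mu> {w} = 0"
begin

sublocale prob_space \<mu> by (rule prob)

definition Below :: "'a list \<Rightarrow> (nat \<Rightarrow> 'a) set" where
  "Below p = {w\<in>L. below_prefix w p}"

definition AtMost :: "'a list \<Rightarrow> (nat \<Rightarrow> 'a) set" where
  "AtMost p = {w\<in>L. below_prefix w p \<or> starts_with w p}"

definition Down :: "(nat \<Rightarrow> 'a) \<Rightarrow> (nat \<Rightarrow> 'a) set" where
  "Down w = {y\<in>L. lex_le y w}"

lemma space_eq: "space \<mu> = L"
  using borel by (simp add: borel_on_def)

lemma measure_L: "measure \<mu> L = 1"
  using prob_space space_eq by simp

lemma cantor_closed_L: "cantor_closed L"
  using shift by (simp add: is_shift_def)

lemma shiftmap_in: "w \<in> L \<Longrightarrow> shiftmap w \<in> L"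
  using shift by (auto simp: is_shift_def)

lemma Cyl_eq: "Cyl L p = {w\<in>L. starts_with w p}"
  by (simp add: Cyl_def starts_with_def)

lemma Cyl_nonempty_if_Fact:
  assumes "v \<in> Fact L" shows "Cyl L v \<noteq> {}"
proof -
  obtain w n where w: "w \<in> L" "v = map w [n..<n + length v]" using assms by (auto simp: Fact_def)
  have "(shiftmap ^^ n) w \<in> L"
    using w(1) by (induction n) (auto intro: shiftmap_in)
  moreover have "starts_with ((shiftmap ^^ n) w) v"
    using w(2) by (auto simp: starts_with_def funpow_shiftmap) (metis add_diff_cancel_left' nth_map_upt)
  ultimately show ?thesis by (auto simp: Cyl_eq)
qed

lemma AtMost_eq: "AtMost p = Below p \<union> Cyl L p"
  by (auto simp: AtMost_def Below_def Cyl_eq)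

lemma Below_Cyl_disjoint: "Below p \<inter> Cyl L p = {}"
  using prefix_trichotomy by (auto simp: Below_def Cyl_eq)

lemma Below_Nil: "Below [] = {}"
  by (simp add: Below_def)

lemma AtMost_Nil: "AtMost [] = L"
  by (simp add: AtMost_def)

lemma Below_snoc: "Below (p @ [c]) = Below p \<union> (\<Union>c'\<in>{c'. c' < c}. Cyl L (p @ [c']))"
  by (auto simp: Below_def below_prefix_snoc Cyl_eq starts_with_snoc)

lemma Below_subset_snoc: "Below p \<subseteq> Below (p @ [c])"
  by (auto simp: Below_def below_prefix_snoc)

lemma AtMost_snoc_subset: "AtMost (p @ [c]) \<subseteq> AtMost p"
  by (auto simp: AtMost_def below_prefix_snoc starts_with_snoc)

lemma Cyl_sets: "Cyl L p \<in> sets \<mu>"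
  using borel by (simp add: borel_on_def sigma_sets.Basic)

lemma Below_sets: "Below p \<in> sets \<mu>"
proof (induction p rule: rev_induct)
  case (snoc c p)
  then show ?case unfolding Below_snoc by (intro sets.Un sets.finite_UN) (auto simp: Cyl_sets)
qed (simp add: Below_Nil)

lemma AtMost_sets: "AtMost p \<in> sets \<mu>"
  unfolding AtMost_eq using Below_sets Cyl_sets by simp

lemma measure_AtMost: "measure \<mu> (AtMost p) = measure \<mu> (Below p) + measure \<mu> (Cyl L p)"
  unfolding AtMost_eq by (rule finite_measure_Union[OF Below_sets Cyl_sets Below_Cyl_disjoint])

lemma Down_eq_INT_AtMost: "Down w = (\<Inter>n. AtMost (map w [0..<n]))"
  using lex_le_iff_not_above_any_prefix[OF starts_with_initial_segment]
  by (auto simp: Down_def AtMost_def)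

lemma Down_sets: "Down w \<in> sets \<mu>"
  unfolding Down_eq_INT_AtMost by (intro sets.countable_INT) (auto simp: AtMost_sets)

lemma singleton_eq_INT_Cyl: "w \<in> L \<Longrightarrow> {w} = (\<Inter>n. Cyl L (map w [0..<n]))"
  by (auto simp: Cyl_eq starts_with_def simp del: upt_Suc)

lemma measure_singleton: "w \<in> L \<Longrightarrow> measure \<mu> {w} = 0"
  using nonatomic by (simp add: measure_def)

lemma singleton_sets: "w \<in> L \<Longrightarrow> {w} \<in> sets \<mu>"
  by (subst singleton_eq_INT_Cyl) (auto simp: Cyl_sets)

lemma lexmin_least: "lexmin L \<in> L \<and> (\<forall>w\<in>L. lex_le (lexmin L) w)"
proof -
  have "L \<noteq> {}" using not_empty space_eq by simp
  then obtain m where "m \<in> L" "\<forall>w\<in>L. lex_le m w"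
    using cantor_closed_lex_min[OF cantor_closed_L] by blast
  then have "\<exists>!m. m \<in> L \<and> (\<forall>w\<in>L. lex_le m w)"
    using lex_le_antisym by blast
  then show ?thesis unfolding lexmin_def by (rule theI')
qed

lemma phi_mu_eq: "phi_mu \<mu> L w = measure \<mu> (Down w)"
  unfolding phi_mu_def Down_def using lexmin_least by metis

lemma measure_Down_le:
  assumes "m \<in> L" "Down m \<subseteq> S \<union> {m}" "S \<in> sets \<mu>"
  shows "measure \<mu> (Down m) \<le> measure \<mu> S"
proof -
  have "measure \<mu> (Down m) \<le> measure \<mu> (S \<union> {m})"
    using assms by (intro finite_measure_mono sets.Un singleton_sets)
  also have "\<dots> \<le> measure \<mu> S + measure \<mu> {m}"
    using assms by (intro measure_Un_le singleton_sets)
  finally show ?thesis using measure_singleton[OF assms(1)] by simp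
qed

end

section \<open>Inverting \<open>\<phi>\<^sub>\<mu>\<close>\<close>

text \<open>For \<open>x \<in> [0,1)\<close>, pick letter by letter the largest \<open>c\<close> with \<open>\<mu>(Below (p @ [c])) \<le> x\<close>.
  The limit word is the lexicographically largest \<open>w\<close> with \<open>\<phi>\<^sub>\<mu>(w) = x\<close>, i.e. \<open>\<phi>\<^sup>-\<^sup>1(\<iota> x)\<close>.\<close>

context shift_measure
begin

lemma greedy_step:
  assumes "measure \<mu> (Below p) \<le> x" "x < measure \<mu> (AtMost p)"
    and c: "c = Max {c. measure \<mu> (Below (p @ [c])) \<le> x}"
  shows "measure \<mu> (Below (p @ [c])) \<le> x \<and> x < measure \<mu> (AtMost (p @ [c]))"
proof -
  let ?C = "{c. measure \<mu> (Below (p @ [c])) \<le> x}"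
  have "Below (p @ [Min UNIV]) = Below p"
    by (auto simp: Below_def below_prefix_snoc)
  then have "Min UNIV \<in> ?C" using assms(1) by simp
  then have c_in: "c \<in> ?C" unfolding c by (intro Max_in) auto
  have c_max: "c' \<in> ?C \<Longrightarrow> c' \<le> c" for c' unfolding c by (intro Max_ge) auto
  have "x < measure \<mu> (AtMost (p @ [c]))"
  proof (cases "\<exists>c'. c < c'")
    case True
    define c' where "c' = Min {c'. c < c'}"
    have "c < c'" unfolding c'_def using True by (metis Min_in finite mem_Collect_eq empty_iff)
    moreover have "c < a \<Longrightarrow> c' \<le> a" for a unfolding c'_def by (intro Min_le) auto
    ultimately have successor: "a < c' \<longleftrightarrow> a \<le> c" for a by (meson leD le_less_trans not_le)
    have "c' \<notin> ?C" using c_max \<open>c < c'\<close> by force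
    moreover have "Below (p @ [c']) = AtMost (p @ [c])"
      unfolding Below_def AtMost_def below_prefix_snoc starts_with_snoc successor by auto
    ultimately show ?thesis by simp
  next
    case False
    then have "a \<le> c" for a by (simp add: not_less)
    then have "AtMost (p @ [c]) = AtMost p"
      unfolding AtMost_def below_prefix_snoc starts_with_snoc by (auto simp: order.order_iff_strict)
    then show ?thesis using assms(2) by simp
  qed
  then show ?thesis using c_in by simp
qed

primrec greedy_prefix :: "real \<Rightarrow> nat \<Rightarrow> 'a list" where
  "greedy_prefix x 0 = []"
| "greedy_prefix x (Suc n) =
     greedy_prefix x n @ [Max {c. measure \<mu> (Below (greedy_prefix x n @ [c])) \<le> x}]"

lemma length_greedy_prefix [simp]: "length (greedy_prefix x n) = n"
  by (induction n) auto

lemma greedy_prefix_bounds: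
  assumes "0 \<le> x" "x < 1"
  shows "measure \<mu> (Below (greedy_prefix x n)) \<le> x \<and> x < measure \<mu> (AtMost (greedy_prefix x n))"
proof (induction n)
  case 0 then show ?case using assms by (simp add: Below_Nil AtMost_Nil measure_L)
next
  case (Suc n) then show ?case using greedy_step[OF _ _ refl] by simp
qed

lemma nth_greedy_prefix: "i < n \<Longrightarrow> greedy_prefix x n ! i = greedy_prefix x (Suc i) ! i"
  by (induction n) (auto simp: nth_append less_Suc_eq)

definition greedy_word :: "real \<Rightarrow> nat \<Rightarrow> 'a" where
  "greedy_word x i = greedy_prefix x (Suc i) ! i"

lemma greedy_word_starts_with: "starts_with (greedy_word x) (greedy_prefix x n) \<and> length (greedy_prefix x n) = n"
  unfolding starts_with_def greedy_word_def length_greedy_prefix by (metis nth_greedy_prefix)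

lemma greedy_word_in_L:
  assumes "0 \<le> x" "x < 1" shows "greedy_word x \<in> L"
proof -
  have "\<exists>w\<in>L. \<forall>i<n. w i = greedy_word x i" for n
  proof -
    have "measure \<mu> (Below (greedy_prefix x n)) < measure \<mu> (AtMost (greedy_prefix x n))"
      using greedy_prefix_bounds[OF assms] by (meson le_less_trans)
    then obtain w where "w \<in> Cyl L (greedy_prefix x n)"
      using measure_AtMost[of "greedy_prefix x n"] by fastforce
    then show ?thesis using greedy_word_starts_with[of x n] by (auto simp: Cyl_eq starts_with_def)
  qed
  then show ?thesis using cantor_closed_L unfolding cantor_closed_def by blast
qed

lemma measure_Down_greedy_word:
  assumes "0 \<le> x" "x < 1" shows "measure \<mu> (Down (greedy_word x)) = x"
proof (rule antisym)
  let ?w = "greedy_word x" and ?p = "greedy_prefix x"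
  note bounds = greedy_prefix_bounds[OF assms]
  have "Down ?w = (\<Inter>n. AtMost (?p n))"
    using lex_le_iff_not_above_any_prefix[OF greedy_word_starts_with] by (auto simp: Down_def AtMost_def)
  moreover have "(\<lambda>n. measure \<mu> (AtMost (?p n))) \<longlonglongrightarrow> measure \<mu> (\<Inter>n. AtMost (?p n))"
    by (rule finite_Lim_measure_decseq)
      (auto simp: AtMost_sets AtMost_snoc_subset decseq_SucI)
  then have "x \<le> measure \<mu> (\<Inter>n. AtMost (?p n))"
    by (rule LIMSEQ_le_const) (use bounds in \<open>auto intro: less_imp_le\<close>)
  ultimately show "x \<le> measure \<mu> (Down ?w)" by simp
  have "Down ?w \<subseteq> (\<Union>n. Below (?p n)) \<union> {?w}"
    using lex_less_iff_below_some_prefix[OF greedy_word_starts_with] by (auto simp: Down_def Below_def lex_le_def)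
  then have "measure \<mu> (Down ?w) \<le> measure \<mu> (\<Union>n. Below (?p n))"
    using greedy_word_in_L[OF assms] by (intro measure_Down_le) (auto simp: Below_sets)
  moreover have "(\<lambda>n. measure \<mu> (Below (?p n))) \<longlonglongrightarrow> measure \<mu> (\<Union>n. Below (?p n))"
    by (rule finite_Lim_measure_incseq)
      (auto simp: Below_sets Below_subset_snoc incseq_SucI)
  then have "measure \<mu> (\<Union>n. Below (?p n)) \<le> x"
    by (rule LIMSEQ_le_const2) (use bounds in auto)
  ultimately show "measure \<mu> (Down ?w) \<le> x" by linarith
qed

lemma measure_Down_above_greedy_word:
  assumes "0 \<le> x" "x < 1" "w \<in> L" "lex_less (greedy_word x) w"
  shows "x < measure \<mu> (Down w)"
proof -
  let ?p = "greedy_prefix x"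
  obtain k where k: "\<forall>i<k. greedy_word x i = w i" "greedy_word x k < w k"
    using assms(4) by (auto simp: lex_less_def)
  have "above_prefix w (?p (Suc k))"
    using k greedy_word_starts_with[of x "Suc k"]
    unfolding above_prefix_def starts_with_def by (intro exI[of _ k]) auto
  then have "AtMost (?p (Suc k)) \<subseteq> Down w"
    using below_above_prefix_lex_less above_prefix_lex_less
    by (auto simp: AtMost_def Down_def lex_le_def)
  then have "measure \<mu> (AtMost (?p (Suc k))) \<le> measure \<mu> (Down w)"
    by (intro finite_measure_mono Down_sets)
  then show ?thesis using greedy_prefix_bounds[OF assms(1,2), of "Suc k"] by linarith
qed

lemma phi_inv_eq_greedy_word:
  assumes "0 \<le> x" "x < 1" shows "phi_inv \<mu> L (x, False) = greedy_word x"
  unfolding phi_inv_def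
proof (rule the_equality)
  note props = greedy_word_in_L[OF assms] measure_Down_greedy_word[OF assms]
    measure_Down_above_greedy_word[OF assms]
  then show "greedy_word x \<in> L \<and> phi_hat \<mu> L (greedy_word x) = (x, False)"
    unfolding phi_hat_def phi_mu_eq by force
  fix w assume w: "w \<in> L \<and> phi_hat \<mu> L w = (x, False)"
  then have "measure \<mu> (Down w) = x" "\<not> (\<exists>w'\<in>L. lex_less w w' \<and> phi_mu \<mu> L w' = phi_mu \<mu> L w)"
    unfolding phi_hat_def phi_mu_eq by auto
  then show "w = greedy_word x"
    using props w lex_less_total unfolding phi_mu_eq by force
qed

end

section \<open>The intervals \<open>I\<^sup>(\<^sup>k\<^sup>)\<close>\<close>

context shift_measure
begin

lemma Below_subset_Down: "starts_with w v \<Longrightarrow> Below v \<subseteq> Down w"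
  using below_prefix_lex_less by (auto simp: Below_def Down_def lex_le_def)

lemma Down_subset_AtMost: "starts_with w v \<Longrightarrow> Down w \<subseteq> AtMost v"
  using above_prefix_lex_less prefix_trichotomy not_lex_le by (auto simp: AtMost_def Down_def) blast

lemma Down_subset_Below: "below_prefix w v \<Longrightarrow> Down w \<subseteq> Below v"
  using below_prefix_lex_less below_above_prefix_lex_less prefix_trichotomy not_lex_le
  by (auto simp: Below_def Down_def) blast

lemma AtMost_subset_Down: "above_prefix w v \<Longrightarrow> AtMost v \<subseteq> Down w"
  using above_prefix_lex_less below_above_prefix_lex_less by (auto simp: AtMost_def Down_def lex_le_def)

text \<open>The next two lemmas use the least word of a closed set: \<open>Down m\<close> then adds only the null
  set \<open>{m}\<close> to the words below that set.\<close>

lemma least_above_prefix_Down_le: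
  assumes "{y\<in>L. above_prefix y v} \<noteq> {}"
  shows "\<exists>m\<in>L. above_prefix m v \<and> measure \<mu> (Down m) \<le> measure \<mu> (AtMost v)"
proof -
  have "cantor_closed {y\<in>L. above_prefix y v}"
    by (rule cantor_closed_prefix_determined[OF cantor_closed_L, where N = "length v"])
      (auto simp: above_prefix_def)
  then obtain m where m: "m \<in> L" "above_prefix m v" "\<forall>y\<in>L. above_prefix y v \<longrightarrow> lex_le m y"
    using cantor_closed_lex_min[OF _ assms] by blast
  have "Down m \<subseteq> AtMost v \<union> {m}"
  proof
    fix y assume y: "y \<in> Down m"
    show "y \<in> AtMost v \<union> {m}"
    proof (cases "y = m")
      case False
      with y have "y \<in> L" "lex_less y m" by (auto simp: Down_def lex_le_def)
      then have "\<not> above_prefix y v" using m(3) not_lex_le by blast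
      with \<open>y \<in> L\<close> show ?thesis using prefix_trichotomy by (auto simp: AtMost_def)
    qed simp
  qed
  then have "measure \<mu> (Down m) \<le> measure \<mu> (AtMost v)"
    using m(1) by (intro measure_Down_le AtMost_sets)
  with m show ?thesis by blast
qed

lemma least_in_Cyl_Down_le:
  assumes "Cyl L v \<noteq> {}"
  shows "\<exists>m\<in>Cyl L v. measure \<mu> (Down m) \<le> measure \<mu> (Below v)"
proof -
  have "cantor_closed (Cyl L v)"
    by (rule cantor_closed_prefix_determined[OF cantor_closed_L, where N = "length v"])
      (auto simp: Cyl_eq starts_with_def)
  then obtain m where m: "m \<in> Cyl L v" "\<forall>y\<in>Cyl L v. lex_le m y"
    using cantor_closed_lex_min[OF _ assms] by blast
  then have mL: "m \<in> L" and m_starts: "starts_with m v" by (auto simp: Cyl_eq)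
  have "Down m \<subseteq> Below v \<union> {m}"
  proof
    fix y assume y: "y \<in> Down m"
    show "y \<in> Below v \<union> {m}"
    proof (cases "y = m")
      case False
      with y have "y \<in> L" "lex_less y m" by (auto simp: Down_def lex_le_def)
      then have "\<not> starts_with y v" using m(2) not_lex_le by (auto simp: Cyl_eq)
      moreover have "\<not> above_prefix y v"
        using above_prefix_lex_less[OF m_starts] \<open>lex_less y m\<close> lex_less_asym by blast
      ultimately show ?thesis using \<open>y \<in> L\<close> prefix_trichotomy by (auto simp: Below_def)
    qed simp
  qed
  then have "measure \<mu> (Down m) \<le> measure \<mu> (Below v)"
    using mL by (intro measure_Down_le Below_sets)
  with m show ?thesis by blast
qed

lemma greedy_word_in_Cyl_iff:
  assumes ne: "Cyl L v \<noteq> {}" and x: "0 \<le> x" "x < 1"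
  shows "greedy_word x \<in> Cyl L v \<longleftrightarrow> measure \<mu> (Below v) \<le> x \<and> x < measure \<mu> (AtMost v)"
proof -
  let ?w = "greedy_word x"
  note w_in_L = greedy_word_in_L[OF x] and measure_w = measure_Down_greedy_word[OF x]
    and above_w = measure_Down_above_greedy_word[OF x]
  show ?thesis
  proof
    assume "?w \<in> Cyl L v"
    then have starts: "starts_with ?w v" by (simp add: Cyl_eq)
    have "measure \<mu> (Below v) \<le> x" "x \<le> measure \<mu> (AtMost v)"
      using measure_w finite_measure_mono[OF Below_subset_Down[OF starts] Down_sets]
        finite_measure_mono[OF Down_subset_AtMost[OF starts] AtMost_sets] by auto
    moreover have "x \<noteq> measure \<mu> (AtMost v)"
    proof (cases "{y\<in>L. above_prefix y v} = {}")
      case True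
      then have "AtMost v = L" using prefix_trichotomy by (auto simp: AtMost_def)
      then show ?thesis using x measure_L by simp
    next
      case False
      then obtain m where "m \<in> L" "above_prefix m v" "measure \<mu> (Down m) \<le> measure \<mu> (AtMost v)"
        using least_above_prefix_Down_le by blast
      moreover have "x < measure \<mu> (Down m)"
        using above_w above_prefix_lex_less[OF starts] calculation(1,2) by blast
      ultimately show ?thesis by simp
    qed
    ultimately show "measure \<mu> (Below v) \<le> x \<and> x < measure \<mu> (AtMost v)" by simp
  next
    assume bounds: "measure \<mu> (Below v) \<le> x \<and> x < measure \<mu> (AtMost v)"
    have "\<not> below_prefix ?w v"
    proof
      assume below: "below_prefix ?w v"
      obtain m where m: "m \<in> Cyl L v" "measure \<mu> (Down m) \<le> measure \<mu> (Below v)"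
        using least_in_Cyl_Down_le[OF ne] by blast
      then have "x < measure \<mu> (Down m)"
        using above_w below_prefix_lex_less[OF below] by (auto simp: Cyl_eq)
      moreover have "x \<le> measure \<mu> (Below v)"
        using measure_w finite_measure_mono[OF Down_subset_Below[OF below] Below_sets] by simp
      ultimately show False using m(2) bounds by simp
    qed
    moreover have "\<not> above_prefix ?w v"
    proof
      assume "above_prefix ?w v"
      then have "measure \<mu> (AtMost v) \<le> x"
        using measure_w finite_measure_mono[OF AtMost_subset_Down Down_sets] by metis
      then show False using bounds by simp
    qed
    ultimately show "?w \<in> Cyl L v" using prefix_trichotomy w_in_L by (auto simp: Cyl_eq)
  qed
qed

lemma I_k_eq_interval:
  assumes "v \<in> Fact L"
  shows "I_k \<mu> L v = {measure \<mu> (Below v)..<measure \<mu> (AtMost v)}"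
proof -
  have "measure \<mu> (AtMost v) \<le> 1"
    using measure_L finite_measure_mono[of "AtMost v" L] by (auto simp: AtMost_def space_eq)
  then have "\<forall>x. measure \<mu> (Below v) \<le> x \<and> x < measure \<mu> (AtMost v) \<longrightarrow> 0 \<le> x \<and> x < 1"
    using measure_nonneg[of \<mu> "Below v"] by linarith
  then show ?thesis
    using greedy_word_in_Cyl_iff[OF Cyl_nonempty_if_Fact[OF assms]]
    by (auto simp: I_k_def phi_inv_eq_greedy_word)
qed

end

section \<open>\<open>T\<^sub>L\<close> is a translation on each \<open>I\<^sup>(\<^sup>k\<^sup>)\<close>\<close>

lemma Cons_in_Fact:
  assumes "y \<in> L" "starts_with (shiftmap y) u"
  shows "y 0 # u \<in> Fact L"
proof -
  have "y 0 # u = map y [0..<0 + length (y 0 # u)]"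
    using assms(2)
    by (intro nth_equalityI)
      (auto simp: starts_with_def shiftmap_def nth_Cons split: nat.split simp del: upt_Suc)
  with assms(1) show ?thesis unfolding Fact_def mem_Collect_eq by metis
qed

context shift_measure
begin

lemma measure_Down_split:
  assumes "starts_with w p"
  shows "measure \<mu> (Down w) = measure \<mu> (Below p) + measure \<mu> (Cyl L p \<inter> Down w)"
proof -
  have "Down w = Below p \<union> (Cyl L p \<inter> Down w)"
    using Below_subset_Down[OF assms] Down_subset_AtMost[OF assms] AtMost_eq by auto
  moreover have "Below p \<inter> (Cyl L p \<inter> Down w) = {}"
    using Below_Cyl_disjoint by auto
  ultimately show ?thesis
    using finite_measure_Union[OF Below_sets sets.Int[OF Cyl_sets Down_sets]] by metis
qed

text \<open>As \<open>u\<close> is not left special, \<open>a\<close> is the only letter that can precede \<open>u\<close>, so on the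
  words starting with \<open>u\<close> the shift has an inverse, prepending \<open>a\<close>, which preserves the order.\<close>

lemma Cyl_Int_Down_eq_shift_preimage:
  assumes F: "a # u \<in> Fact L" and not_ls: "\<not> left_special L u" and w: "w \<in> Cyl L (a # u)"
  shows "Cyl L (a # u) \<inter> Down w = {y\<in>L. shiftmap y \<in> Cyl L u \<inter> Down (shiftmap w)}"
proof (intro set_eqI iffI)
  have w0: "w 0 = a" using w by (auto simp: Cyl_eq starts_with_def)
  fix y
  {
    assume y: "y \<in> Cyl L (a # u) \<inter> Down w"
    then have "y \<in> L" "y 0 = a" "starts_with (shiftmap y) u"
      by (auto simp: Cyl_eq Down_def starts_with_def shiftmap_def)
    moreover have "lex_le (shiftmap y) (shiftmap w)"
      using y w0 shift_lex_le_iff \<open>y 0 = a\<close> by (auto simp: Down_def)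
    ultimately show "y \<in> {y\<in>L. shiftmap y \<in> Cyl L u \<inter> Down (shiftmap w)}"
      using shiftmap_in by (auto simp: Cyl_eq Down_def)
  next
    assume "y \<in> {y\<in>L. shiftmap y \<in> Cyl L u \<inter> Down (shiftmap w)}"
    then have y: "y \<in> L" "starts_with (shiftmap y) u" "lex_le (shiftmap y) (shiftmap w)"
      by (auto simp: Cyl_eq Down_def)
    have "y 0 = a"
      using Cons_in_Fact[OF y(1,2)] F not_ls unfolding left_special_def by blast
    then have "starts_with y (a # u)"
      using y(2) by (auto simp: starts_with_def shiftmap_def nth_Cons split: nat.split)
    moreover have "lex_le y w" using shift_lex_le_iff[of y w] y(3) \<open>y 0 = a\<close> w0 by simp
    ultimately show "y \<in> Cyl L (a # u) \<inter> Down w" using y(1) by (auto simp: Cyl_eq Down_def)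
  }
qed

lemma T_L_translation:
  assumes invariant: "\<forall>B\<in>sets \<mu>. emeasure \<mu> {w\<in>L. shiftmap w \<in> B} = emeasure \<mu> B"
    and F: "a # u \<in> Fact L" and not_ls: "\<not> left_special L u" and x: "x \<in> I_k \<mu> L (a # u)"
  shows "T_L \<mu> L x = x + (measure \<mu> (Below u) - measure \<mu> (Below (a # u)))"
proof -
  let ?w = "greedy_word x"
  have x01: "0 \<le> x" "x < 1" and w: "?w \<in> Cyl L (a # u)"
    using x by (auto simp: I_k_def phi_inv_eq_greedy_word)
  then have "starts_with ?w (a # u)" "starts_with (shiftmap ?w) u"
    by (auto simp: Cyl_eq starts_with_def shiftmap_def)
  note split_w = measure_Down_split[OF this(1)] and split_shift = measure_Down_split[OF this(2)]
  have "emeasure \<mu> (Cyl L (a # u) \<inter> Down ?w) = emeasure \<mu> (Cyl L u \<inter> Down (shiftmap ?w))"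
    unfolding Cyl_Int_Down_eq_shift_preimage[OF F not_ls w]
    using invariant sets.Int[OF Cyl_sets Down_sets] by blast
  then have "measure \<mu> (Cyl L (a # u) \<inter> Down ?w) = measure \<mu> (Cyl L u \<inter> Down (shiftmap ?w))"
    by (simp add: measure_def)
  moreover have "T_L \<mu> L x = measure \<mu> (Down (shiftmap ?w))"
    unfolding T_L_def phi_inv_eq_greedy_word[OF x01] phi_hat_def phi_mu_eq by simp
  ultimately show ?thesis
    using split_w split_shift measure_Down_greedy_word[OF x01] by simp
qed

end

theorem mainTheorem12:
  fixes L :: "(nat \<Rightarrow> 'a::{linorder,finite}) set"
    and \<mu> :: "(nat \<Rightarrow> 'a) measure"
  assumes shift: "is_shift L"
    and ls_long: "\<forall>n. \<exists>u. n \<le> length u \<and> left_special L u"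
    and borel: "borel_on L \<mu>"
    and prob: "prob_space \<mu>"
    and invariant: "\<forall>B\<in>sets \<mu>. emeasure \<mu> {w\<in>L. shiftmap w \<in> B} = emeasure \<mu> B"
    and nonatomic: "\<forall>w\<in>L. emeasure \<mu> {w} = 0"
    and pos_cyl: "\<forall>v. Cyl L v \<noteq> {} \<longrightarrow> emeasure \<mu> (Cyl L v) > 0"
    and SP_null: "SP L \<inter> L \<in> sets \<mu> \<and> emeasure \<mu> (SP L \<inter> L) = 0"
  shows "\<forall>v\<in>Vwords L.
           (\<exists>a b. a < b \<and> I_k \<mu> L v = {a..<b}) \<and>
           (\<exists>c. \<forall>x\<in>I_k \<mu> L v. T_L \<mu> L x = x + c)"
proof
  interpret shift_measure L \<mu> by (rule shift_measure.intro[OF shift borel prob nonatomic])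
  fix v assume "v \<in> Vwords L"
  then obtain a u where v: "v = a # u" and F: "a # u \<in> Fact L" and not_ls: "\<not> left_special L u"
    unfolding Vwords_def by blast
  have "0 < measure \<mu> (Cyl L v)"
    using pos_cyl Cyl_nonempty_if_Fact F v by (simp add: emeasure_eq_measure)
  then have "measure \<mu> (Below v) < measure \<mu> (AtMost v)"
    by (simp add: measure_AtMost)
  then show "(\<exists>a b. a < b \<and> I_k \<mu> L v = {a..<b}) \<and> (\<exists>c. \<forall>x\<in>I_k \<mu> L v. T_L \<mu> L x = x + c)"
    using I_k_eq_interval[OF F] T_L_translation[OF invariant F not_ls] v by blast
qed

end
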